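(* Let $\mathcal{H}$ be a finite-dimensional Hilbert space and let $\mathcal{E}$ be a unital quantum channel on $\mathcal{L}(\mathcal{H})$ (i.e. completely positive, trace-preserving, and $\mathcal{E}(I)=I$). Then the following four sets of operators coincide: (1) $MD(\mathcal{E})$; (2) $UCC(\mathcal{E})$; (3) $\mathcal{E}^\dagger(MD(\mathcal{E}^\dagger))$; (4) $\mathcal{E}^\dagger(UCC(\mathcal{E}^\dagger))$.
   Context: $\mathcal{E}^\dagger$ denotes the dual (Heisenberg-picture) map defined by $\mathrm{Tr}(\mathcal{E}(\rho)X)=\mathrm{Tr}(\rho\,\mathcal{E}^\dagger(X))$; if $\mathcal{E}(\rho)=\sum_iE_i\rho E_i^\dagger$ then $\mathcal{E}^\dagger(X)=\sum_iE_i^\dagger XE_i$. For a linear map $\phi$ on $\mathcal{L}(\mathcal{H})$, its multiplicative domain is $MD(\phi)=\{a\in\mathcal{L}(\mathcal{H}):\phi(a)\phi(b)=\phi(ab)\text{ and }\phi(b)\phi(a)=\phi(ba)\text{ for all }b\in\mathcal{L}(\mathcal{H})\}$. For a unital quantum channel $\Phi$ with Kraus operators $\{F_i\}$, $UCC(\Phi):=\{\rho\in\mathcal{L}(\mathcal{H}):\Phi^\dagger\circ\Phi(\rho)=\rho\}=\{\rho:[\rho,F_i^\dagger F_j]=0\text{ for all }i,j\}$. For a set $S$, $\mathcal{E}^\dagger(S)=\{\mathcal{E}^\dagger(s):s\in S\}$. *)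

theory Defs
  imports "HOL-Analysis.Analysis"
begin

text \<open>Operators on the finite-dimensional Hilbert space \<open>complex ^ 'n\<close> are
  matrices \<open>complex ^ 'n ^ 'n\<close>; \<open>**\<close> is composition.\<close>

definition adj :: "complex ^ 'n ^ 'n \<Rightarrow> complex ^ 'n ^ 'n" where
  "adj A = (\<chi> i j. cnj (A $ j $ i))"

definition kraus_channel :: "(complex ^ 'n ^ 'n) list \<Rightarrow> complex ^ 'n ^ 'n \<Rightarrow> complex ^ 'n ^ 'n" where
  "kraus_channel Ks \<rho> = sum_list (map (\<lambda>K. K ** \<rho> ** adj K) Ks)"

definition kraus_dual :: "(complex ^ 'n ^ 'n) list \<Rightarrow> complex ^ 'n ^ 'n \<Rightarrow> complex ^ 'n ^ 'n" where
  "kraus_dual Ks X = sum_list (map (\<lambda>K. adj K ** X ** K) Ks)"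

text \<open>Trace preserving: \<open>\<Sum> K\<^sup>\<dagger>K = I\<close>; unital: \<open>\<Sum> K K\<^sup>\<dagger> = I\<close>.
  Complete positivity is built into the Kraus form.\<close>
definition unital_channel :: "(complex ^ 'n ^ 'n) list \<Rightarrow> bool" where
  "unital_channel Ks \<longleftrightarrow>
     sum_list (map (\<lambda>K. adj K ** K) Ks) = mat 1 \<and>
     sum_list (map (\<lambda>K. K ** adj K) Ks) = mat 1"

definition MD :: "(complex ^ 'n ^ 'n \<Rightarrow> complex ^ 'n ^ 'n) \<Rightarrow> (complex ^ 'n ^ 'n) set" where
  "MD \<phi> = {a. \<forall>b. \<phi> a ** \<phi> b = \<phi> (a ** b) \<and> \<phi> b ** \<phi> a = \<phi> (b ** a)}"

definition UCC :: "(complex ^ 'n ^ 'n \<Rightarrow> complex ^ 'n ^ 'n) \<Rightarrow> (complex ^ 'n ^ 'n \<Rightarrow> complex ^ 'n ^ 'n)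
    \<Rightarrow> (complex ^ 'n ^ 'n) set" where
  "UCC \<Phi> \<Phi>d = {\<rho>. \<Phi>d (\<Phi> \<rho>) = \<rho>}"

end

theory Submission
  imports Defs
begin

text \<open>For Kraus operators with \<open>\<Sum> K K\<^sup>\<dagger> = I\<close> the Schwarz defect
  \<open>E(a\<^sup>\<dagger>a) - E(a)\<^sup>\<dagger>E(a)\<close> equals \<open>\<Sum> D\<^sub>K\<^sup>\<dagger>D\<^sub>K\<close> with
  \<open>D\<^sub>K = aK\<^sup>\<dagger> - K\<^sup>\<dagger>E(a)\<close>, so its trace vanishes only if every \<open>D\<^sub>K\<close> does.
  For \<open>a \<in> MD(E)\<close> the defects of \<open>a\<close> and \<open>a\<^sup>\<dagger>\<close> vanish outright; for
  \<open>a \<in> UCC(E)\<close> their traces vanish, since trace preservation and duality give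
  \<open>tr E(a)\<^sup>\<dagger>E(a) = tr a\<^sup>\<dagger>E\<^sup>\<dagger>E(a) = tr a\<^sup>\<dagger>a = tr E(a\<^sup>\<dagger>a)\<close>.
  Conversely the resulting intertwining relations \<open>aK\<^sup>\<dagger> = K\<^sup>\<dagger>E(a)\<close>,
  \<open>Ka = E(a)K\<close> make \<open>E\<close> multiplicative at \<open>a\<close> and give \<open>E\<^sup>\<dagger>E(a) = a\<close>.
  The dual channel has Kraus operators \<open>K\<^sup>\<dagger>\<close>, and \<open>UCC(\<Phi>,\<Psi>) = \<Psi>(UCC(\<Psi>,\<Phi>))\<close>
  holds for any pair of maps.\<close>

type_synonym 'n cmat = "complex ^ 'n ^ 'n"

lemma matrix_add_rdistrib: "(B + C) ** A = B ** A + C ** (A :: 'a::semiring_1 ^ 'p ^ 'n)"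
  by (simp add: matrix_matrix_mult_def vec_eq_iff algebra_simps sum.distrib)

lemma matrix_diff_ldistrib: "A ** (B - C) = A ** B - A ** (C :: 'a::ring_1 ^ 'p ^ 'n)"
  by (simp add: matrix_matrix_mult_def vec_eq_iff algebra_simps sum_subtractf)

lemma matrix_diff_rdistrib: "(B - C) ** A = B ** A - C ** (A :: 'a::ring_1 ^ 'p ^ 'n)"
  by (simp add: matrix_matrix_mult_def vec_eq_iff algebra_simps sum_subtractf)

lemma matrix_mult_sum_list_left:
  "A ** (\<Sum>x\<leftarrow>xs. f x) = (\<Sum>x\<leftarrow>xs. A ** (f x :: 'a::semiring_1 ^ 'p ^ 'n))"
  by (induction xs) (simp_all add: matrix_add_ldistrib)

lemma matrix_mult_sum_list_right:
  "(\<Sum>x\<leftarrow>xs. f x) ** A = (\<Sum>x\<leftarrow>xs. f x ** (A :: 'a::semiring_1 ^ 'p ^ 'n))"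
  by (induction xs) (simp_all add: matrix_add_rdistrib)

lemma trace_zero [simp]: "trace 0 = 0"
  by (simp add: trace_def)

lemma trace_sum_list: "trace (\<Sum>x\<leftarrow>xs. f x) = (\<Sum>x\<leftarrow>xs. trace (f x :: 'a::comm_semiring_1 ^ 'n ^ 'n))"
  by (induction xs) (simp_all add: trace_add)

lemma adj_adj [simp]: "adj (adj A) = A"
  by (simp add: adj_def vec_eq_iff)

lemma adj_0 [simp]: "adj 0 = 0"
  by (simp add: adj_def vec_eq_iff)

lemma adj_add: "adj (A + B) = adj A + adj B"
  by (simp add: adj_def vec_eq_iff)

lemma adj_diff: "adj (A - B) = adj A - adj B"
  by (simp add: adj_def vec_eq_iff)

lemma adj_mult: "adj (A ** B) = adj B ** adj (A :: 'n::finite cmat)"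
  by (simp add: adj_def matrix_matrix_mult_def vec_eq_iff mult.commute)

lemma adj_sum_list: "adj (\<Sum>x\<leftarrow>xs. f x) = (\<Sum>x\<leftarrow>xs. adj (f x))"
  by (induction xs) (simp_all add: adj_add)

lemma adj_inject [simp]: "adj A = adj B \<longleftrightarrow> A = B"
  by (metis adj_adj)

lemma trace_adj_mult_self:
  "trace (adj X ** X) = of_real (\<Sum>i\<in>UNIV. \<Sum>j\<in>UNIV. (cmod (X $ j $ i))\<^sup>2)"
  by (simp add: trace_def adj_def matrix_matrix_mult_def of_real_sum
      mult.commute[of "cnj _"] flip: complex_norm_square)

lemma trace_sum_list_adj_mult_self_eq_0:
  assumes "trace (\<Sum>x\<leftarrow>xs. adj (X x) ** X x) = 0"
  shows "x \<in> set xs \<Longrightarrow> X x = (0 :: 'n::finite cmat)"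
proof -
  let ?nsq = "\<lambda>x. \<Sum>i\<in>UNIV. \<Sum>j\<in>UNIV. (cmod (X x $ j $ i))\<^sup>2"
  have nonneg: "?nsq x \<ge> 0" for x
    by (simp add: sum_nonneg)
  have "of_real (\<Sum>x\<leftarrow>xs. ?nsq x) = trace (\<Sum>x\<leftarrow>xs. adj (X x) ** X x)"
    by (simp add: trace_sum_list trace_adj_mult_self o_def flip: sum_list_of_real)
  with assms have "(\<Sum>x\<leftarrow>xs. ?nsq x) = 0"
    by simp
  then have "\<forall>x\<in>set xs. ?nsq x = 0"
    using sum_list_nonneg_eq_0_iff[of "map ?nsq xs"] nonneg by auto
  then show "x \<in> set xs \<Longrightarrow> X x = 0"
    by (auto simp: sum_nonneg_eq_0_iff sum_nonneg vec_eq_iff)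
qed

lemma kraus_channel_adj: "kraus_channel Ks (adj a) = adj (kraus_channel Ks a)"
  by (simp add: kraus_channel_def adj_sum_list adj_mult matrix_mul_assoc)

lemma kraus_dual_eq_kraus_channel: "kraus_dual Ks = kraus_channel (map adj Ks)"
  by (simp add: fun_eq_iff kraus_dual_def kraus_channel_def o_def)

lemma kraus_channel_eq_kraus_dual: "kraus_channel Ks = kraus_dual (map adj Ks)"
  by (simp add: kraus_dual_eq_kraus_channel o_def)

lemma unital_channel_map_adj: "unital_channel Ks \<Longrightarrow> unital_channel (map adj Ks)"
  by (simp add: unital_channel_def o_def)

lemma trace_kraus_channel:
  assumes "(\<Sum>K\<leftarrow>Ks. adj K ** K) = mat 1"
  shows "trace (kraus_channel Ks X) = trace X"
proof -
  have "trace (K ** X ** adj K) = trace ((adj K ** K) ** X)" for K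
    using trace_mul_sym[of "K ** X" "adj K"] by (simp add: matrix_mul_assoc)
  then have "trace (kraus_channel Ks X) = (\<Sum>K\<leftarrow>Ks. trace ((adj K ** K) ** X))"
    by (simp add: kraus_channel_def trace_sum_list)
  also have "\<dots> = trace X"
    by (simp add: assms flip: trace_sum_list matrix_mult_sum_list_right)
  finally show ?thesis .
qed

lemma trace_kraus_channel_mult: "trace (kraus_channel Ks X ** Y) = trace (X ** kraus_dual Ks Y)"
proof -
  have "trace (K ** X ** adj K ** Y) = trace (X ** (adj K ** Y ** K))" for K
    using trace_mul_sym[of K "X ** adj K ** Y"] by (simp add: matrix_mul_assoc)
  then have "trace (kraus_channel Ks X ** Y) = (\<Sum>K\<leftarrow>Ks. trace (X ** (adj K ** Y ** K)))"
    by (simp add: kraus_channel_def matrix_mult_sum_list_right trace_sum_list)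
  also have "\<dots> = trace (X ** kraus_dual Ks Y)"
    by (simp add: kraus_dual_def trace_sum_list matrix_mult_sum_list_left)
  finally show ?thesis .
qed

lemma kraus_schwarz_defect:
  fixes Ks :: "'n::finite cmat list" and a :: "'n cmat"
  assumes "(\<Sum>K\<leftarrow>Ks. K ** adj K) = mat 1"
  defines "D K \<equiv> a ** adj K - adj K ** kraus_channel Ks a"
  shows "(\<Sum>K\<leftarrow>Ks. adj (D K) ** D K)
    = kraus_channel Ks (adj a ** a) - adj (kraus_channel Ks a) ** kraus_channel Ks a"
proof -
  define Ea where "Ea = kraus_channel Ks a"
  have "adj (D K) ** D K = K ** (adj a ** a) ** adj K - (K ** adj a ** adj K) ** Ea
      - (adj Ea ** (K ** a ** adj K) - adj Ea ** (K ** adj K) ** Ea)" for K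
    by (simp add: D_def Ea_def adj_diff adj_mult matrix_diff_ldistrib matrix_diff_rdistrib
        matrix_mul_assoc diff_diff_eq2)
  then have "(\<Sum>K\<leftarrow>Ks. adj (D K) ** D K) = kraus_channel Ks (adj a ** a)
      - kraus_channel Ks (adj a) ** Ea - (adj Ea ** Ea - adj Ea ** (\<Sum>K\<leftarrow>Ks. K ** adj K) ** Ea)"
    by (simp add: sum_list_subtractf kraus_channel_def Ea_def
        flip: matrix_mult_sum_list_left matrix_mult_sum_list_right)
  then show ?thesis
    by (simp add: assms(1) kraus_channel_adj Ea_def)
qed

definition kraus_intertwines :: "'n::finite cmat list \<Rightarrow> 'n cmat \<Rightarrow> bool" where
  "kraus_intertwines Ks a \<longleftrightarrow> (\<forall>K\<in>set Ks. a ** adj K = adj K ** kraus_channel Ks a)"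

lemma kraus_intertwines_adj_iff:
  "kraus_intertwines Ks (adj a) \<longleftrightarrow> (\<forall>K\<in>set Ks. K ** a = kraus_channel Ks a ** K)"
proof -
  have "adj a ** adj K = adj K ** adj (kraus_channel Ks a) \<longleftrightarrow> K ** a = kraus_channel Ks a ** K"
    for K
    by (simp flip: adj_mult)
  then show ?thesis
    by (simp add: kraus_intertwines_def kraus_channel_adj)
qed

lemma kraus_intertwines_if_trace_schwarz_defect_eq_0:
  assumes "(\<Sum>K\<leftarrow>Ks. K ** adj K) = mat 1"
    and "trace (kraus_channel Ks (adj a ** a) - adj (kraus_channel Ks a) ** kraus_channel Ks a) = 0"
  shows "kraus_intertwines Ks a"
  using trace_sum_list_adj_mult_self_eq_0[of "\<lambda>K. a ** adj K - adj K ** kraus_channel Ks a" Ks]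
  by (simp add: kraus_intertwines_def kraus_schwarz_defect assms)

lemma MD_kraus_channel_iff:
  assumes "(\<Sum>K\<leftarrow>Ks. K ** adj K) = mat 1"
  shows "a \<in> MD (kraus_channel Ks) \<longleftrightarrow> kraus_intertwines Ks a \<and> kraus_intertwines Ks (adj a)"
proof
  let ?E = "kraus_channel Ks"
  assume "a \<in> MD ?E"
  then have "?E (adj a) ** ?E a = ?E (adj a ** a)" "?E a ** ?E (adj a) = ?E (a ** adj a)"
    by (auto simp: MD_def)
  then show "kraus_intertwines Ks a \<and> kraus_intertwines Ks (adj a)"
    by (auto intro!: kraus_intertwines_if_trace_schwarz_defect_eq_0 assms
        simp: kraus_channel_adj)
next
  assume "kraus_intertwines Ks a \<and> kraus_intertwines Ks (adj a)"
  then have left: "K ** a = kraus_channel Ks a ** K"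
    and right: "a ** adj K = adj K ** kraus_channel Ks a" if "K \<in> set Ks" for K
    using that by (auto simp: kraus_intertwines_adj_iff) (auto simp: kraus_intertwines_def)
  have termwise: "kraus_channel Ks a ** (K ** b ** adj K) = K ** (a ** b) ** adj K"
    "K ** b ** adj K ** kraus_channel Ks a = K ** (b ** a) ** adj K"
    if "K \<in> set Ks" for K b
  proof -
    have "kraus_channel Ks a ** (K ** b ** adj K) = (kraus_channel Ks a ** K) ** b ** adj K"
      by (simp add: matrix_mul_assoc)
    then show "kraus_channel Ks a ** (K ** b ** adj K) = K ** (a ** b) ** adj K"
      by (simp add: left[OF that, symmetric] matrix_mul_assoc)
    have "K ** b ** adj K ** kraus_channel Ks a = K ** b ** (adj K ** kraus_channel Ks a)"
      by (simp add: matrix_mul_assoc)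
    then show "K ** b ** adj K ** kraus_channel Ks a = K ** (b ** a) ** adj K"
      by (simp add: right[OF that, symmetric] matrix_mul_assoc)
  qed
  have "kraus_channel Ks a ** kraus_channel Ks b = kraus_channel Ks (a ** b)"
    and "kraus_channel Ks b ** kraus_channel Ks a = kraus_channel Ks (b ** a)" for b
    unfolding kraus_channel_def[of Ks b] kraus_channel_def[of Ks "_ ** _"]
      matrix_mult_sum_list_left matrix_mult_sum_list_right
    by (simp_all add: termwise cong: map_cong)
  then show "a \<in> MD (kraus_channel Ks)"
    by (simp add: MD_def)
qed

lemma UCC_kraus_channel_iff:
  assumes "unital_channel Ks"
  shows "a \<in> UCC (kraus_channel Ks) (kraus_dual Ks)
    \<longleftrightarrow> kraus_intertwines Ks a \<and> kraus_intertwines Ks (adj a)"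
proof
  let ?E = "kraus_channel Ks"
  have tp: "(\<Sum>K\<leftarrow>Ks. adj K ** K) = mat 1" and unital: "(\<Sum>K\<leftarrow>Ks. K ** adj K) = mat 1"
    using assms by (simp_all add: unital_channel_def)
  assume "a \<in> UCC ?E (kraus_dual Ks)"
  then have "kraus_dual Ks (?E a) = a"
    by (simp add: UCC_def)
  then have norm_eq: "trace (adj (?E a) ** ?E a) = trace (adj a ** a)"
    using trace_kraus_channel_mult[of Ks "adj a" "?E a"] by (simp add: kraus_channel_adj)
  have "trace (?E (adj a ** a) - adj (?E a) ** ?E a) = 0"
    by (simp add: trace_sub trace_kraus_channel[OF tp] norm_eq)
  moreover have "trace (?E (adj (adj a) ** adj a) - adj (?E (adj a)) ** ?E (adj a)) = 0"
    by (simp add: trace_sub trace_kraus_channel[OF tp] kraus_channel_adj norm_eq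
        trace_mul_sym[of a] trace_mul_sym[of "?E a"])
  ultimately show "kraus_intertwines Ks a \<and> kraus_intertwines Ks (adj a)"
    by (simp add: kraus_intertwines_if_trace_schwarz_defect_eq_0[OF unital])
next
  assume "kraus_intertwines Ks a \<and> kraus_intertwines Ks (adj a)"
  then have "adj K ** kraus_channel Ks a ** K = a ** (adj K ** K)" if "K \<in> set Ks" for K
    using that by (auto simp: kraus_intertwines_def matrix_mul_assoc)
  then have "kraus_dual Ks (kraus_channel Ks a) = a ** (\<Sum>K\<leftarrow>Ks. adj K ** K)"
    unfolding kraus_dual_def matrix_mult_sum_list_left by (simp cong: map_cong)
  with assms show "a \<in> UCC (kraus_channel Ks) (kraus_dual Ks)"
    by (simp add: UCC_def unital_channel_def)
qed

lemma MD_eq_UCC_kraus_channel: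
  assumes "unital_channel Ks"
  shows "MD (kraus_channel Ks) = UCC (kraus_channel Ks) (kraus_dual Ks)"
proof -
  have "(\<Sum>K\<leftarrow>Ks. K ** adj K) = mat 1"
    using assms by (simp add: unital_channel_def)
  then show ?thesis
    by (simp add: set_eq_iff MD_kraus_channel_iff UCC_kraus_channel_iff[OF assms])
qed

lemma UCC_eq_image_UCC: "UCC \<Phi> \<Psi> = \<Psi> ` UCC \<Psi> \<Phi>"
proof
  show "UCC \<Phi> \<Psi> \<subseteq> \<Psi> ` UCC \<Psi> \<Phi>"
  proof
    fix a
    assume "a \<in> UCC \<Phi> \<Psi>"
    then have "\<Psi> (\<Phi> a) = a" and "\<Phi> a \<in> UCC \<Psi> \<Phi>"
      by (simp_all add: UCC_def)
    then show "a \<in> \<Psi> ` UCC \<Psi> \<Phi>"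
      by (metis image_eqI)
  qed
  show "\<Psi> ` UCC \<Psi> \<Phi> \<subseteq> UCC \<Phi> \<Psi>"
    by (auto simp: UCC_def)
qed

theorem theorem6:
  fixes Ks :: "(complex ^ 'n ^ 'n) list"
  assumes "unital_channel Ks"
  shows "MD (kraus_channel Ks) = UCC (kraus_channel Ks) (kraus_dual Ks)
       \<and> UCC (kraus_channel Ks) (kraus_dual Ks) = kraus_dual Ks ` MD (kraus_dual Ks)
       \<and> kraus_dual Ks ` MD (kraus_dual Ks) = kraus_dual Ks ` UCC (kraus_dual Ks) (kraus_channel Ks)"
proof -
  have "MD (kraus_dual Ks) = UCC (kraus_dual Ks) (kraus_channel Ks)"
    using MD_eq_UCC_kraus_channel[OF unital_channel_map_adj[OF assms]]
    unfolding kraus_dual_eq_kraus_channel[of Ks, symmetric] kraus_channel_eq_kraus_dual[of Ks, symmetric] .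
  then show ?thesis
    using MD_eq_UCC_kraus_channel[OF assms] UCC_eq_image_UCC[of "kraus_channel Ks"] by simp
qed

end
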